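(* Let $e=(B,X,M,A,X)$ be an idempotent of $\mathbb M$ with $e\notin\{\mathbf0,\mathbf1\}$, let $(B,X)[\overline z]$ be a reachable term of $\overline{\mathcal G}$, and let $z_e\in\overline I^*$ with $\varphi(z_e)=e$. Then $L_\emptyset((B,X)[z_e\overline z])\subseteq\ \downarrow L_\emptyset((B,X)[\overline z])$.
   Context: Let $\mathcal{G}=(N,T,I,P,S)$ be an indexed grammar: $N$ (non-terminals), $T$ (terminals), $I$ (stack symbols) finite pairwise disjoint alphabets, $S\in N$, and productions of the forms $A\to w$ ($w\in T^*$), $A\to BC$, $A\to Bf$, $Af\to B$ ($A,B,C\in N$, $f\in I$). Terms $A[z]$ ($A\in N$, $z\in I^*$ the stack, top on the left; $A$ means $A[\varepsilon]$); sentential forms are words over terms and terminals; derivation: $uA[z]v\Rightarrow uB[z]C[z]v$ if $A\to BC\in P$; $uA[z]v\Rightarrow uB[fz]v$ if $A\to Bf\in P$; $uA[fz]v\Rightarrow uB[z]v$ if $Af\to B\in P$; $uA[z]v\Rightarrow uwv$ if $A\to w\in P$, $w\in T^*$; $\Rightarrow^*$ is the reflexive transitive closure; $\downarrow L$ is the set of scattered subwords of words in $L$. For $X\subseteq N$, $z\in I^*$: $z\cdot X=\{A\in N:\exists u\in(X\cup T)^*, A[z]\Rightarrow^*u\}$ (non-terminals in $u$ with empty stack); $\mathrm{Useful}=\{A:\exists w\in T^*, A\Rightarrow^*w\}$; assume $S\in\mathrm{Useful}$. The annotated version $\overline{\mathcal G}$ has non-terminals $\overline N=\{(A,X)\in N\times2^N:A\in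 X\}$, stack symbols $\overline I=I\times 2^N$, start $(S,\mathrm{Useful})$, and productions: $(A,X)\to w$ for $A\to w\in P$, $A\in X$; $(A,X)\to(B,X)(C,X)$ for $A\to BC\in P$, $A,B,C\in X$; $(A,X)\to(B,Y)(f,X)$ for $A\to Bf\in P$ with $Y=f\cdot X$, $A\in X$, $B\in Y$; $(A,Y)(f,X)\to(B,X)$ for $Af\to B\in P$ with $Y=f\cdot X$, $A\in Y$, $B\in X$. A term of $\overline{\mathcal G}$ is reachable if it occurs in some sentential form $u$ with $(S,\mathrm{Useful})\Rightarrow^*_{\overline{\mathcal G}}u$. For a sentential form $u$ of $\overline{\mathcal G}$, $L_\emptyset(u)=\{w\in T^*:u\Rightarrow^*_{\overline{\mathcal G}}w\}$. Assume every $f\in I$ occurs in some production $A\to Bf$ and there are functions $\alpha,\beta:I\to N$ such that every production $A\to Bf$ in $P$ satisfies $A=\alpha(f)$, $B=\beta(f)$. For $X\subseteq N$, $A\,\mathcal R_X\,B$ holds iff $A,B\in X$ and $(A,X)\Rightarrow^*_{\overline{\mathcal G}}u\,(B,X)\,v$ for some sentential forms $u,v$ of $\overline{\mathcal G}$. The stack monoid $\mathbb M$ has elements: all tuples $(B,Y,M,A,X)$ with $A,B\in N$, $X,Y\subseteq N$, $M\in\mathbb B^{N\times N}$ (Boolean matrices, product over $(\vee,\wedge)$), plus a neutral element $\mathbf 1$ and an absorbing element $\mathbf 0$; product $(B_2,Y_2,M_2,A_2,X_2)\cdot(B_1,Y_1,M_1,A_1,X_1)=(B_2,Y_2,M_1M_2,A_1,X_1)$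 if $X_2=Y_1$ and $B_1\,\mathcal R_{X_2}\,A_2$, and $\mathbf 0$ otherwise. $\varphi:\overline I^*\to\mathbb M$ is the monoid morphism with $\varphi(f,X)=(\beta(f),f\cdot X,M_{f,X},\alpha(f),X)$, where $M_{f,X}(A,B)=\top$ iff $A[f]\Rightarrow^*_{\mathcal G}uBv$ for some $u,v\in(X\cup T)^*$. An element $e$ is idempotent if $e\cdot e=e$. *)

theory Defs
  imports Main "HOL-Library.Sublist"
begin

text \<open>Productions: A -> w, A -> B C, A -> B f (push), A f -> B (pop).\<close>
datatype ('n,'t,'i) prod =
    TermP 'n "'t list"
  | BinP 'n 'n 'n
  | PushP 'n 'n 'i
  | PopP 'n 'i 'n

text \<open>Symbols of sentential forms: terminals, and terms A[z] (stack z, top on the left).\<close>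
datatype ('n,'t,'i) sym = Tm 't | NT 'n "'i list"

datatype ('n,'t,'i) ig = IG
  (nts: "'n set") (tms: "'t set") (stk: "'i set")
  (prods: "('n,'t,'i) prod set") (start: 'n)

definition prod_ok :: "('n,'t,'i) ig \<Rightarrow> ('n,'t,'i) prod \<Rightarrow> bool" where
  "prod_ok G p = (case p of
      TermP A w \<Rightarrow> A \<in> nts G \<and> set w \<subseteq> tms G
    | BinP A B C \<Rightarrow> A \<in> nts G \<and> B \<in> nts G \<and> C \<in> nts G
    | PushP A B f \<Rightarrow> A \<in> nts G \<and> B \<in> nts G \<and> f \<in> stk G
    | PopP A f B \<Rightarrow> A \<in> nts G \<and> B \<in> nts G \<and> f \<in> stk G)"

text \<open>Well-formed indexed grammar (disjointness of alphabets is automatic by typing).\<close>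
definition wf_ig :: "('n,'t,'i) ig \<Rightarrow> bool" where
  "wf_ig G = (finite (nts G) \<and> finite (tms G) \<and> finite (stk G) \<and> start G \<in> nts G
      \<and> (\<forall>p \<in> prods G. prod_ok G p))"

inductive step :: "('n,'t,'i) ig \<Rightarrow> ('n,'t,'i) sym list \<Rightarrow> ('n,'t,'i) sym list \<Rightarrow> bool"
  for G where
  step_bin: "BinP A B C \<in> prods G \<Longrightarrow>
        step G (u @ [NT A z] @ v) (u @ [NT B z, NT C z] @ v)"
| step_push: "PushP A B f \<in> prods G \<Longrightarrow>
        step G (u @ [NT A z] @ v) (u @ [NT B (f # z)] @ v)"
| step_pop: "PopP A f B \<in> prods G \<Longrightarrow>
        step G (u @ [NT A (f # z)] @ v) (u @ [NT B z] @ v)"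
| step_term: "TermP A w \<in> prods G \<Longrightarrow>
        step G (u @ [NT A z] @ v) (u @ map Tm w @ v)"

definition derives :: "('n,'t,'i) ig \<Rightarrow> ('n,'t,'i) sym list \<Rightarrow> ('n,'t,'i) sym list \<Rightarrow> bool" where
  "derives G = (step G)\<^sup>*\<^sup>*"

text \<open>u \<in> (X \<union> T)*: terminals of G and nonterminals of X with empty stack.\<close>
definition over :: "('n,'t,'i) ig \<Rightarrow> 'n set \<Rightarrow> ('n,'t,'i) sym list \<Rightarrow> bool" where
  "over G X u = (\<forall>s \<in> set u. case s of Tm a \<Rightarrow> a \<in> tms G | NT B z \<Rightarrow> z = [] \<and> B \<in> X)"

definition act :: "('n,'t,'i) ig \<Rightarrow> 'i list \<Rightarrow> 'n set \<Rightarrow> 'n set" where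
  "act G z X = {A \<in> nts G. \<exists>u. derives G [NT A z] u \<and> over G X u}"

definition Useful :: "('n,'t,'i) ig \<Rightarrow> 'n set" where
  "Useful G = {A \<in> nts G. \<exists>w. set w \<subseteq> tms G \<and> derives G [NT A []] (map Tm w)}"

definition annot_prods :: "('n,'t,'i) ig \<Rightarrow> ('n \<times> 'n set, 't, 'i \<times> 'n set) prod set" where
  "annot_prods G =
     {TermP (A,X) w | A X w. TermP A w \<in> prods G \<and> X \<subseteq> nts G \<and> A \<in> X}
   \<union> {BinP (A,X) (B,X) (C,X) | A B C X. BinP A B C \<in> prods G \<and> X \<subseteq> nts G
        \<and> A \<in> X \<and> B \<in> X \<and> C \<in> X}
   \<union> {PushP (A,X) (B, act G [f] X) (f,X) | A B f X. PushP A B f \<in> prods G \<and> X \<subseteq> nts G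
        \<and> A \<in> X \<and> B \<in> act G [f] X}
   \<union> {PopP (A, act G [f] X) (f,X) (B,X) | A B f X. PopP A f B \<in> prods G \<and> X \<subseteq> nts G
        \<and> A \<in> act G [f] X \<and> B \<in> X}"

definition annot :: "('n,'t,'i) ig \<Rightarrow> ('n \<times> 'n set, 't, 'i \<times> 'n set) ig" where
  "annot G = IG {(A,X). X \<subseteq> nts G \<and> A \<in> X} (tms G) (stk G \<times> Pow (nts G))
                 (annot_prods G) (start G, Useful G)"

definition reachable :: "('n,'t,'i) ig \<Rightarrow> 'n \<Rightarrow> 'i list \<Rightarrow> bool" where
  "reachable G A z = (\<exists>u. derives G [NT (start G) []] u \<and> NT A z \<in> set u)"

definition Lempty :: "('n,'t,'i) ig \<Rightarrow> ('n,'t,'i) sym list \<Rightarrow> 't list set" where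
  "Lempty G u = {w. set w \<subseteq> tms G \<and> derives G u (map Tm w)}"

definition downclose :: "'a list set \<Rightarrow> 'a list set" where
  "downclose L = {w. \<exists>v \<in> L. subseq w v}"

definition RX :: "('n,'t,'i) ig \<Rightarrow> 'n set \<Rightarrow> 'n \<Rightarrow> 'n \<Rightarrow> bool" where
  "RX G X A B = (A \<in> X \<and> B \<in> X \<and>
     (\<exists>u v. derives (annot G) [NT (A,X) []] (u @ [NT (B,X) []] @ v)))"

text \<open>Elements: neutral One, absorbing Zero, tuples (B,Y,M,A,X) with M a Boolean N x N matrix.\<close>
datatype 'n mon = One | Zero | El 'n "'n set" "'n \<Rightarrow> 'n \<Rightarrow> bool" 'n "'n set"

definition matmul :: "'n set \<Rightarrow> ('n \<Rightarrow> 'n \<Rightarrow> bool) \<Rightarrow> ('n \<Rightarrow> 'n \<Rightarrow> bool) \<Rightarrow> ('n \<Rightarrow> 'n \<Rightarrow> bool)" where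
  "matmul N M1 M2 = (\<lambda>A C. \<exists>B \<in> N. M1 A B \<and> M2 B C)"

fun mmult :: "('n,'t,'i) ig \<Rightarrow> 'n mon \<Rightarrow> 'n mon \<Rightarrow> 'n mon" where
  "mmult G One x = x"
| "mmult G (El b y m a x) One = El b y m a x"
| "mmult G Zero _ = Zero"
| "mmult G (El b y m a x) Zero = Zero"
| "mmult G (El B2 Y2 M2 A2 X2) (El B1 Y1 M1 A1 X1) =
     (if X2 = Y1 \<and> RX G X2 B1 A2 then El B2 Y2 (matmul (nts G) M1 M2) A1 X1 else Zero)"

definition Mfx :: "('n,'t,'i) ig \<Rightarrow> 'i \<Rightarrow> 'n set \<Rightarrow> 'n \<Rightarrow> 'n \<Rightarrow> bool" where
  "Mfx G f X A B = (A \<in> nts G \<and> B \<in> nts G \<and>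
     (\<exists>u v. over G X u \<and> over G X v \<and> derives G [NT A [f]] (u @ [NT B []] @ v)))"

definition phi1 :: "('n,'t,'i) ig \<Rightarrow> ('i \<Rightarrow> 'n) \<Rightarrow> ('i \<Rightarrow> 'n) \<Rightarrow> 'i \<times> 'n set \<Rightarrow> 'n mon" where
  "phi1 G \<alpha> \<beta> fX = (case fX of (f, X) \<Rightarrow> El (\<beta> f) (act G [f] X) (Mfx G f X) (\<alpha> f) X)"

text \<open>The monoid morphism on words (top of stack on the left).\<close>
fun phi :: "('n,'t,'i) ig \<Rightarrow> ('i \<Rightarrow> 'n) \<Rightarrow> ('i \<Rightarrow> 'n) \<Rightarrow> ('i \<times> 'n set) list \<Rightarrow> 'n mon" where
  "phi G \<alpha> \<beta> [] = One"
| "phi G \<alpha> \<beta> (x # xs) = mmult G (phi1 G \<alpha> \<beta> x) (phi G \<alpha> \<beta> xs)"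

end

theory Submission
  imports Defs
begin

text \<open>
  Because \<open>e\<close> is idempotent and not \<open>0\<close>, \<open>B \<R>\<^sub>X A\<close>: the annotated term \<open>(B, X)\<close>
  derives a sentential form containing \<open>(A, X)\<close>. Reading \<open>z\<^sub>e\<close> from the bottom, each
  letter \<open>(f, Y)\<close> is pushed by the production \<open>\<alpha>(f) \<rightarrow> \<beta>(f) f\<close>, and consecutive letters are
  linked by the \<open>\<R>\<close>-relations that make \<open>\<phi>(z\<^sub>e)\<close> nonzero; hence \<open>(A, X)[zbar]\<close> derives a form
  containing \<open>(B, X)[z\<^sub>e zbar]\<close>, and altogether \<open>(B, X)[zbar] \<Rightarrow>\<^sup>* L (B, X)[z\<^sub>e zbar] R\<close>.

  In the annotated grammar every term of a sentential form derived from \<open>(S, Useful)\<close> is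
  productive: the set annotating a stack level consists of nonterminals that can empty that
  level into the set below, and lifting the corresponding derivations of the original grammar
  shows that the term derives a terminal word. So \<open>L\<close> and \<open>R\<close> derive terminal words
  \<open>w\<^sub>1\<close>, \<open>w\<^sub>2\<close>, and every \<open>w\<close> derived from \<open>(B, X)[z\<^sub>e zbar]\<close> is a scattered subword of
  \<open>w\<^sub>1 w w\<^sub>2\<close>, which is derived from \<open>(B, X)[zbar]\<close>.
\<close>

inductive expands :: "('n,'t,'i) ig \<Rightarrow> ('n,'t,'i) sym \<Rightarrow> ('n,'t,'i) sym list \<Rightarrow> bool"
  for G where
  expands_bin: "BinP A B C \<in> prods G \<Longrightarrow> expands G (NT A z) [NT B z, NT C z]"
| expands_push: "PushP A B f \<in> prods G \<Longrightarrow> expands G (NT A z) [NT B (f # z)]"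
| expands_pop: "PopP A f B \<in> prods G \<Longrightarrow> expands G (NT A (f # z)) [NT B z]"
| expands_term: "TermP A w \<in> prods G \<Longrightarrow> expands G (NT A z) (map Tm w)"

lemma step_expands: "expands G x r \<Longrightarrow> step G (p @ x # q) (p @ r @ q)"
  by (induction rule: expands.induct)
    (simp_all add: step.intros[where u = p and v = q, simplified])

lemma step_iff_expands:
  "step G u v \<longleftrightarrow> (\<exists>p x q r. expands G x r \<and> u = p @ x # q \<and> v = p @ r @ q)"
proof
  show "step G u v \<Longrightarrow> \<exists>p x q r. expands G x r \<and> u = p @ x # q \<and> v = p @ r @ q"
    by (induction rule: step.induct) (metis append_Cons append_Nil expands.intros)+
qed (elim exE conjE, simp add: step_expands)

lemma derives_refl [simp]: "derives G u u"
  by (simp add: derives_def)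

lemma derives_trans [trans]: "derives G u v \<Longrightarrow> derives G v w \<Longrightarrow> derives G u w"
  by (simp add: derives_def)

lemma derives_expands: "expands G x r \<Longrightarrow> derives G [x] r"
  unfolding derives_def using step_expands[of G x r "[]" "[]"] by auto

lemma derives_context: "derives G u v \<Longrightarrow> derives G (p @ u @ q) (p @ v @ q)"
  unfolding derives_def
proof (induction rule: rtranclp_induct)
  case (step v v')
  then obtain p' x q' r where "expands G x r" "v = p' @ x # q'" "v' = p' @ r @ q'"
    unfolding step_iff_expands by blast
  then have "step G (p @ v @ q) (p @ v' @ q)"
    using step_expands[of G x r "p @ p'" "q' @ q"] by simp
  with step.IH show ?case by simp
qed simp

lemma derives_append: "derives G u u' \<Longrightarrow> derives G v v' \<Longrightarrow> derives G (u @ v) (u' @ v')"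
  using derives_context[of G u u' "[]" v] derives_context[of G v v' u' "[]"]
  by (auto intro: derives_trans)

fun extend_stack :: "'i list \<Rightarrow> ('n,'t,'i) sym \<Rightarrow> ('n,'t,'i) sym" where
  "extend_stack s (Tm a) = Tm a"
| "extend_stack s (NT A z) = NT A (z @ s)"

lemma extend_stack_comp_Tm [simp]: "extend_stack s \<circ> Tm = Tm"
  by auto

lemma expands_extend_stack:
  "expands G x r \<Longrightarrow> expands G (extend_stack s x) (map (extend_stack s) r)"
  by (induction rule: expands.induct) (auto intro: expands.intros)

lemma derives_extend_stack:
  "derives G u v \<Longrightarrow> derives G (map (extend_stack s) u) (map (extend_stack s) v)"
  unfolding derives_def
proof (induction rule: rtranclp_induct)
  case (step v v')
  then obtain p x q r where "expands G x r" "v = p @ x # q" "v' = p @ r @ q"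
    unfolding step_iff_expands by blast
  then have "step G (map (extend_stack s) v) (map (extend_stack s) v')"
    using step_expands[OF expands_extend_stack] by simp
  with step.IH show ?case by simp
qed simp

definition descendant :: "('n,'t,'i) ig \<Rightarrow> ('n,'t,'i) sym \<Rightarrow> ('n,'t,'i) sym \<Rightarrow> bool" where
  "descendant G x y \<longleftrightarrow> (\<exists>u v. derives G [x] (u @ y # v))"

lemma derives_descendant: "derives G [x] [y] \<Longrightarrow> descendant G x y"
  unfolding descendant_def by (intro exI[of _ "[]"]) simp

lemma descendant_trans [trans]:
  assumes "descendant G x y" and "descendant G y y'"
  shows "descendant G x y'"
proof -
  obtain u v u' v' where "derives G [x] (u @ [y] @ v)" and "derives G [y] (u' @ y' # v')"
    using assms by (auto simp: descendant_def)
  then have "derives G [x] (u @ (u' @ y' # v') @ v)"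
    using derives_context derives_trans by blast
  then show ?thesis
    unfolding descendant_def by (intro exI[of _ "u @ u'"] exI[of _ "v' @ v"]) simp
qed

lemma descendant_extend_stack:
  assumes "descendant G x y"
  shows "descendant G (extend_stack s x) (extend_stack s y)"
proof -
  obtain u v where "derives G [x] (u @ y # v)"
    using assms by (auto simp: descendant_def)
  from derives_extend_stack[OF this, of s] show ?thesis
    unfolding descendant_def by auto
qed

lemma derives_Lempty_subset: "derives G u v \<Longrightarrow> Lempty G v \<subseteq> Lempty G u"
  by (auto simp: Lempty_def intro: derives_trans)

lemma Lempty_append: "w \<in> Lempty G u \<Longrightarrow> w' \<in> Lempty G v \<Longrightarrow> w @ w' \<in> Lempty G (u @ v)"
  by (auto simp: Lempty_def dest: derives_append)

lemma Lempty_Tm: "a \<in> tms G \<Longrightarrow> [a] \<in> Lempty G [Tm a]"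
  by (simp add: Lempty_def)

lemma Lempty_nonempty_if_each: "(\<And>x. x \<in> set u \<Longrightarrow> Lempty G [x] \<noteq> {}) \<Longrightarrow> Lempty G u \<noteq> {}"
proof (induction u)
  case Nil
  have "[] \<in> Lempty G []" by (simp add: Lempty_def)
  then show ?case by blast
next
  case (Cons x u)
  then show ?case using Lempty_append[of _ G "[x]" _ u] by fastforce
qed

lemma over_append [simp]: "over G X (u @ v) \<longleftrightarrow> over G X u \<and> over G X v"
  by (auto simp: over_def)

lemma over_Tm: "set w \<subseteq> tms G \<Longrightarrow> over G X (map Tm w)"
  by (auto simp: over_def)

lemma derives_over_if_each:
  "(\<And>x. x \<in> set v \<Longrightarrow> \<exists>u. derives G [x] u \<and> over G X u) \<Longrightarrow> \<exists>u. derives G v u \<and> over G X u"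
proof (induction v)
  case Nil
  show ?case by (intro exI[of _ "[]"]) (simp add: over_def)
next
  case (Cons x v)
  from Cons.prems obtain u where "derives G [x] u" "over G X u" by auto
  moreover from Cons obtain u' where "derives G v u'" "over G X u'" by auto
  ultimately show ?case
    using derives_append[of G "[x]" u v u'] by (intro exI[of _ "u @ u'"]) simp
qed

text \<open>Frontiers of partial derivation trees of \<open>A[z]\<close>: unlike derivation sequences they split
  at the root production, so inductions can follow the tree.\<close>
inductive frontier :: "('n,'t,'i) ig \<Rightarrow> 'n \<Rightarrow> 'i list \<Rightarrow> ('n,'t,'i) sym list \<Rightarrow> bool"
  for G where
  frontier_refl: "frontier G A z [NT A z]"
| frontier_bin: "BinP A B C \<in> prods G \<Longrightarrow> frontier G B z u \<Longrightarrow> frontier G C z v \<Longrightarrow>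
    frontier G A z (u @ v)"
| frontier_push: "PushP A B f \<in> prods G \<Longrightarrow> frontier G B (f # z) u \<Longrightarrow> frontier G A z u"
| frontier_pop: "PopP A f B \<in> prods G \<Longrightarrow> frontier G B z u \<Longrightarrow> frontier G A (f # z) u"
| frontier_term: "TermP A w \<in> prods G \<Longrightarrow> frontier G A z (map Tm w)"

lemma frontier_of_expands: "expands G (NT A z) r \<Longrightarrow> frontier G A z r"
  by (cases rule: expands.cases)
    (auto intro: frontier.intros frontier_bin[where u = "[_]" and v = "[_]", simplified])

lemma frontier_expands:
  "frontier G A z (p @ x # q) \<Longrightarrow> expands G x r \<Longrightarrow> frontier G A z (p @ r @ q)"
proof (induction A z "p @ x # q" arbitrary: p q rule: frontier.induct)
  case (frontier_refl A z)
  then show ?case by (simp add: Cons_eq_append_conv frontier_of_expands)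
next
  case (frontier_bin A B C z u v)
  from \<open>u @ v = p @ x # q\<close> consider
      q' where "u = p @ x # q'" "q = q' @ v"
    | p' where "p = u @ p'" "v = p' @ x # q"
    by (auto simp: append_eq_append_conv2 append_eq_Cons_conv)
  then show ?case
  proof cases
    case 1
    then show ?thesis using frontier_bin frontier.frontier_bin[of A B C G z "p @ r @ q'" v] by auto
  next
    case 2
    then show ?thesis using frontier_bin frontier.frontier_bin[of A B C G z u "p' @ r @ q"] by auto
  qed
next
  case (frontier_term A w z)
  then show ?case by (auto elim: expands.cases simp: map_eq_append_conv)
qed (auto intro: frontier.intros)

lemma derives_frontier: "derives G [NT A z] u \<Longrightarrow> frontier G A z u"
  unfolding derives_def
proof (induction rule: rtranclp_induct)
  case (step v v')
  then show ?case
    unfolding step_iff_expands by (auto intro: frontier_expands)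
qed (rule frontier_refl)

section \<open>Lifting derivations to the annotated grammar\<close>

lemma wf_ig_prod_ok: "wf_ig G \<Longrightarrow> p \<in> prods G \<Longrightarrow> prod_ok G p"
  by (simp add: wf_ig_def)

lemma annot_simps [simp]:
  "prods (annot G) = annot_prods G" "tms (annot G) = tms G"
  "start (annot G) = (start G, Useful G)"
  by (simp_all add: annot_def)

lemma act_subset_nts: "act G z X \<subseteq> nts G"
  by (auto simp: act_def)

lemma act_intro: "A \<in> nts G \<Longrightarrow> derives G [NT A z] u \<Longrightarrow> over G X u \<Longrightarrow> A \<in> act G z X"
  by (auto simp: act_def)

definition saturated :: "('n,'t,'i) ig \<Rightarrow> 'n set \<Rightarrow> bool" where
  "saturated G X \<longleftrightarrow> X \<subseteq> nts G \<and> act G [] X \<subseteq> X"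

lemma saturatedD:
  "saturated G X \<Longrightarrow> A \<in> nts G \<Longrightarrow> derives G [NT A []] u \<Longrightarrow> over G X u \<Longrightarrow> A \<in> X"
  by (auto simp: saturated_def dest: act_intro)

lemma saturated_Useful: "saturated G (Useful G)"
  unfolding saturated_def
proof safe
  fix A assume "A \<in> act G [] (Useful G)"
  then obtain u where A: "A \<in> nts G" and u: "derives G [NT A []] u" "over G (Useful G) u"
    by (auto simp: act_def)
  have "Lempty G [x] \<noteq> {}" if "x \<in> set u" for x
  proof (cases x)
    case (Tm a)
    then show ?thesis using u(2) that Lempty_Tm[of a G] by (auto simp: over_def)
  next
    case (NT C z)
    then show ?thesis using u(2) that by (auto simp: over_def Useful_def Lempty_def)
  qed
  then have "Lempty G [NT A []] \<noteq> {}"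
    using Lempty_nonempty_if_each derives_Lempty_subset[OF u(1)] by blast
  with A show "A \<in> Useful G"
    by (auto simp: Useful_def Lempty_def)
qed (auto simp: Useful_def)

text \<open>An empty-stack derivation over \<open>f \<cdot> X\<close> becomes, with \<open>f\<close> put under every
  stack, a derivation of \<open>A[f]\<close> whose terms can all be emptied into \<open>X\<close>.\<close>
lemma saturated_act: "saturated G (act G [f] X)"
  unfolding saturated_def
proof (intro conjI act_subset_nts subsetI)
  fix A assume "A \<in> act G [] (act G [f] X)"
  then obtain u where A: "A \<in> nts G" and u: "derives G [NT A []] u" "over G (act G [f] X) u"
    by (auto simp: act_def)
  have "\<exists>v. derives G [x] v \<and> over G X v" if x: "x \<in> set (map (extend_stack [f]) u)" for x
  proof -
    obtain y where y: "y \<in> set u" "x = extend_stack [f] y"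
      using x by auto
    show ?thesis
    proof (cases y)
      case (Tm a)
      then show ?thesis using y u(2) by (intro exI[of _ "[x]"]) (auto simp: over_def)
    next
      case (NT C z)
      then show ?thesis using y u(2) by (auto simp: over_def act_def)
    qed
  qed
  then obtain v where "derives G (map (extend_stack [f]) u) v" "over G X v"
    using derives_over_if_each by blast
  moreover have "derives G [NT A [f]] (map (extend_stack [f]) u)"
    using derives_extend_stack[OF u(1), of "[f]"] by simp
  ultimately show "A \<in> act G [f] X"
    using A by (blast intro: act_intro derives_trans)
qed

fun act_stack :: "('n,'t,'i) ig \<Rightarrow> 'i list \<Rightarrow> 'n set \<Rightarrow> 'n set" where
  "act_stack G [] X = X"
| "act_stack G (f # z) X = act G [f] (act_stack G z X)"

fun annotate :: "('n,'t,'i) ig \<Rightarrow> 'i list \<Rightarrow> 'n set \<Rightarrow> ('i \<times> 'n set) list" where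
  "annotate G [] X = []"
| "annotate G (f # z) X = (f, act_stack G z X) # annotate G z X"

lemma saturated_act_stack: "saturated G X \<Longrightarrow> saturated G (act_stack G z X)"
  by (cases z) (simp_all add: saturated_act)

lemma derives_annot_bin:
  assumes "BinP A B C \<in> prods G" "W \<subseteq> nts G" "A \<in> W" "B \<in> W" "C \<in> W"
  shows "derives (annot G) [NT (A, W) s] [NT (B, W) s, NT (C, W) s]"
  using assms by (intro derives_expands expands_bin) (auto simp: annot_prods_def)

lemma derives_annot_push:
  assumes "PushP A B f \<in> prods G" "W \<subseteq> nts G" "A \<in> W" "B \<in> act G [f] W"
  shows "derives (annot G) [NT (A, W) s] [NT (B, act G [f] W) ((f, W) # s)]"
  using assms by (intro derives_expands expands_push) (auto simp: annot_prods_def)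

lemma derives_annot_pop:
  assumes "PopP A f B \<in> prods G" "W \<subseteq> nts G" "A \<in> act G [f] W" "B \<in> W"
  shows "derives (annot G) [NT (A, act G [f] W) ((f, W) # s)] [NT (B, W) s]"
  using assms by (intro derives_expands expands_pop) (auto simp: annot_prods_def)

lemma derives_annot_term:
  assumes "TermP A w \<in> prods G" "W \<subseteq> nts G" "A \<in> W"
  shows "derives (annot G) [NT (A, W) s] (map Tm w)"
  using assms by (intro derives_expands expands_term) (auto simp: annot_prods_def)

text \<open>Only applied to forms over \<open>X\<close>, whose terms have empty stacks.\<close>
fun lift_sym :: "'n set \<Rightarrow> ('n,'t,'i) sym \<Rightarrow> ('n \<times> 'n set, 't, 'i \<times> 'n set) sym" where
  "lift_sym X (Tm a) = Tm a"
| "lift_sym X (NT A z) = NT (A, X) []"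

lemma lift_sym_comp_Tm [simp]: "lift_sym X \<circ> Tm = Tm"
  by auto

lemma frontier_act_stack:
  assumes "frontier G A z u" and wf: "wf_ig G" and sat: "saturated G X" and "over G X u"
  shows "A \<in> act_stack G z X"
  using assms(1,4)
proof (induction rule: frontier.induct)
  case (frontier_refl A z)
  then show ?case by (simp add: over_def)
next
  case (frontier_bin A B C z u v)
  have "A \<in> nts G"
    using wf_ig_prod_ok[OF wf frontier_bin(1)] by (simp add: prod_ok_def)
  moreover have "over G (act_stack G z X) [NT B [], NT C []]"
    using frontier_bin.IH frontier_bin.prems by (simp add: over_def)
  ultimately show ?case
    using saturatedD[OF saturated_act_stack[OF sat]]
      derives_expands[OF expands_bin[OF frontier_bin(1)]] by blast
next
  case (frontier_push A B f z u)
  then obtain v where "derives G [NT B [f]] v" "over G (act_stack G z X) v"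
    by (auto simp: act_def)
  moreover have "A \<in> nts G"
    using wf_ig_prod_ok[OF wf frontier_push(1)] by (simp add: prod_ok_def)
  ultimately show ?case
    using saturatedD[OF saturated_act_stack[OF sat]]
      derives_expands[OF expands_push[OF frontier_push(1)]] by (blast intro: derives_trans)
next
  case (frontier_pop A f B z u)
  have "A \<in> nts G"
    using wf_ig_prod_ok[OF wf frontier_pop(1)] by (simp add: prod_ok_def)
  moreover have "over G (act_stack G z X) [NT B []]"
    using frontier_pop.IH frontier_pop.prems by (simp add: over_def)
  ultimately show ?case
    using act_intro derives_expands[OF expands_pop[OF frontier_pop(1)], of "[]"] by simp
next
  case (frontier_term A w z)
  have "A \<in> nts G" "set w \<subseteq> tms G"
    using wf_ig_prod_ok[OF wf frontier_term(1)] by (auto simp: prod_ok_def)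
  then show ?case
    using saturatedD[OF saturated_act_stack[OF sat]]
      derives_expands[OF expands_term[OF frontier_term(1)]] over_Tm by blast
qed

lemma frontier_lift:
  assumes "frontier G A z u" and wf: "wf_ig G" and sat: "saturated G X" and "over G X u"
  shows "derives (annot G) [NT (A, act_stack G z X) (annotate G z X)] (map (lift_sym X) u)"
  using assms(1,4)
proof (induction rule: frontier.induct)
  case (frontier_refl A z)
  then show ?case by (simp add: over_def)
next
  case (frontier_bin A B C z u v)
  let ?W = "act_stack G z X" and ?s = "annotate G z X"
  have "A \<in> ?W" "B \<in> ?W" "C \<in> ?W" "?W \<subseteq> nts G"
    using frontier_act_stack[OF frontier.frontier_bin[OF frontier_bin(1-3)] wf sat]
      frontier_act_stack[OF frontier_bin(2) wf sat] frontier_act_stack[OF frontier_bin(3) wf sat]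
      saturated_act_stack[OF sat] frontier_bin.prems by (auto simp: saturated_def)
  then have "derives (annot G) [NT (A, ?W) ?s] ([NT (B, ?W) ?s] @ [NT (C, ?W) ?s])"
    using derives_annot_bin[OF frontier_bin(1)] by simp
  also have "derives (annot G) \<dots> (map (lift_sym X) u @ map (lift_sym X) v)"
    using derives_append frontier_bin.IH frontier_bin.prems by (simp del: append.simps)
  finally show ?case by simp
next
  case (frontier_push A B f z u)
  let ?W = "act_stack G z X" and ?s = "annotate G z X"
  have "A \<in> ?W" "B \<in> act G [f] ?W" "?W \<subseteq> nts G"
    using frontier_act_stack[OF frontier.frontier_push[OF frontier_push(1,2)] wf sat]
      frontier_act_stack[OF frontier_push(2) wf sat]
      saturated_act_stack[OF sat] frontier_push.prems by (auto simp: saturated_def)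
  then have "derives (annot G) [NT (A, ?W) ?s] [NT (B, act G [f] ?W) ((f, ?W) # ?s)]"
    using derives_annot_push[OF frontier_push(1)] by simp
  also have "derives (annot G) \<dots> (map (lift_sym X) u)"
    using frontier_push.IH frontier_push.prems by simp
  finally show ?case .
next
  case (frontier_pop A f B z u)
  let ?W = "act_stack G z X" and ?s = "annotate G z X"
  have "A \<in> act G [f] ?W" "B \<in> ?W" "?W \<subseteq> nts G"
    using frontier_act_stack[OF frontier.frontier_pop[OF frontier_pop(1,2)] wf sat]
      frontier_act_stack[OF frontier_pop(2) wf sat]
      saturated_act_stack[OF sat] frontier_pop.prems by (auto simp: saturated_def)
  then have "derives (annot G) [NT (A, act G [f] ?W) ((f, ?W) # ?s)] [NT (B, ?W) ?s]"
    using derives_annot_pop[OF frontier_pop(1)] by simp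
  also have "derives (annot G) \<dots> (map (lift_sym X) u)"
    using frontier_pop.IH frontier_pop.prems by simp
  finally show ?case by simp
next
  case (frontier_term A w z)
  have "A \<in> act_stack G z X" "act_stack G z X \<subseteq> nts G"
    using frontier_act_stack[OF frontier.frontier_term[OF frontier_term(1)] wf sat]
      saturated_act_stack[OF sat] frontier_term.prems by (auto simp: saturated_def)
  then show ?case
    using derives_annot_term[OF frontier_term(1)] by simp
qed

section \<open>Productivity of reachable annotated terms\<close>

text \<open>\<open>consistent G Y s\<close>: the annotations of a term \<open>(A, Y)[s]\<close> are those that derivations
  from \<open>(S, Useful)\<close> produce.\<close>
fun consistent :: "('n,'t,'i) ig \<Rightarrow> 'n set \<Rightarrow> ('i \<times> 'n set) list \<Rightarrow> bool" where
  "consistent G Y [] \<longleftrightarrow> Y = Useful G"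
| "consistent G Y ((f, X) # s) \<longleftrightarrow> Y = act G [f] X \<and> consistent G X s"

lemma consistent_saturated: "consistent G Y s \<Longrightarrow> saturated G Y"
  by (cases "(G, Y, s)" rule: consistent.cases) (auto simp: saturated_Useful saturated_act)

lemma consistent_productive:
  assumes wf: "wf_ig G"
  shows "consistent G Y s \<Longrightarrow> A \<in> Y \<Longrightarrow> Lempty (annot G) [NT (A, Y) s] \<noteq> {}"
proof (induction s arbitrary: A Y)
  case Nil
  then obtain w where w: "set w \<subseteq> tms G" "derives G [NT A []] (map Tm w)"
    by (auto simp: Useful_def)
  have "derives (annot G) [NT (A, Useful G) []] (map Tm w)"
    using frontier_lift[OF derives_frontier[OF w(2)] wf saturated_Useful over_Tm[OF w(1)]] by simp
  with Nil w(1) show ?case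
    by (auto simp: Lempty_def)
next
  case (Cons fX s)
  obtain f X where fX: "fX = (f, X)" by fastforce
  with Cons.prems have Y: "Y = act G [f] X" and cons_X: "consistent G X s" by auto
  from Cons.prems Y obtain u where u: "derives G [NT A [f]] u" "over G X u"
    by (auto simp: act_def)
  have "derives (annot G) [NT (A, Y) [(f, X)]] (map (lift_sym X) u)"
    using frontier_lift[OF derives_frontier[OF u(1)] wf consistent_saturated[OF cons_X] u(2)] Y
    by simp
  from derives_extend_stack[OF this, of s]
  have "derives (annot G) [NT (A, Y) (fX # s)] (map (extend_stack s \<circ> lift_sym X) u)"
    using fX by simp
  moreover have "Lempty (annot G) [x] \<noteq> {}"
    if x: "x \<in> set (map (extend_stack s \<circ> lift_sym X) u)" for x
  proof -
    obtain y where y: "y \<in> set u" "x = extend_stack s (lift_sym X y)"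
      using x by auto
    from y(1) u(2) have "case y of Tm a \<Rightarrow> a \<in> tms G | NT C z \<Rightarrow> z = [] \<and> C \<in> X"
      by (simp add: over_def)
    then show ?thesis
      using y(2) Cons.IH[OF cons_X] Lempty_Tm[of _ "annot G"] by (cases y) auto
  qed
  ultimately show ?case
    using Lempty_nonempty_if_each derives_Lempty_subset by blast
qed

fun consistent_sym :: "('n,'t,'i) ig \<Rightarrow> ('n \<times> 'n set, 't, 'i \<times> 'n set) sym \<Rightarrow> bool" where
  "consistent_sym G (Tm a) \<longleftrightarrow> a \<in> tms G"
| "consistent_sym G (NT (A, Y) s) \<longleftrightarrow> A \<in> Y \<and> consistent G Y s"

lemma consistent_sym_productive:
  assumes "wf_ig G" and "consistent_sym G x"
  shows "Lempty (annot G) [x] \<noteq> {}"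
proof (cases x)
  case (Tm a)
  then show ?thesis using assms(2) Lempty_Tm[of a "annot G"] by auto
next
  case (NT AY s)
  moreover obtain A Y where "AY = (A, Y)" by fastforce
  ultimately show ?thesis using assms by (simp add: consistent_productive)
qed

lemma expands_annot_consistent:
  assumes wf: "wf_ig G" and "expands (annot G) x r" and "consistent_sym G x" and "y \<in> set r"
  shows "consistent_sym G y"
  using assms(2-)
proof cases
  case (expands_term A w z)
  then obtain A' where "TermP A' w \<in> prods G"
    by (auto simp: annot_prods_def)
  with wf_ig_prod_ok[OF wf] expands_term \<open>y \<in> set r\<close> show ?thesis
    by (force simp: prod_ok_def)
qed (auto simp: annot_prods_def)

lemma derives_annot_consistent:
  assumes wf: "wf_ig G"
  shows "derives (annot G) u v \<Longrightarrow> \<forall>x \<in> set u. consistent_sym G x \<Longrightarrow>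
    \<forall>x \<in> set v. consistent_sym G x"
  unfolding derives_def
proof (induction rule: rtranclp_induct)
  case (step v v')
  then show ?case
    unfolding step_iff_expands by (auto dest: expands_annot_consistent[OF wf])
qed

lemma Lempty_descendant_downclose:
  assumes wf: "wf_ig G" and useful: "start G \<in> Useful G"
    and reach: "reachable (annot G) N z" and desc: "descendant (annot G) (NT N z) t"
  shows "Lempty (annot G) [t] \<subseteq> downclose (Lempty (annot G) [NT N z])"
proof
  fix w assume w: "w \<in> Lempty (annot G) [t]"
  from desc obtain L R where LR: "derives (annot G) [NT N z] (L @ [t] @ R)"
    by (auto simp: descendant_def)
  from reach obtain p q where "derives (annot G) [NT (start G, Useful G) []] (p @ [NT N z] @ q)"
    by (auto simp: reachable_def dest: split_list)
  then have "derives (annot G) [NT (start G, Useful G) []] (p @ (L @ [t] @ R) @ q)"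
    using derives_context[OF LR] derives_trans by blast
  moreover have "consistent_sym G (NT (start G, Useful G) [])"
    using useful by simp
  ultimately have "Lempty (annot G) [x] \<noteq> {}" if "x \<in> set L \<union> set R" for x
    using that derives_annot_consistent[OF wf] consistent_sym_productive[OF wf] by fastforce
  then obtain w1 w2 where "w1 \<in> Lempty (annot G) L" "w2 \<in> Lempty (annot G) R"
    using Lempty_nonempty_if_each by (metis UnCI equals0I)
  then have "w1 @ w @ w2 \<in> Lempty (annot G) [NT N z]"
    using Lempty_append[OF _ Lempty_append[OF w]] derives_Lempty_subset[OF LR] by blast
  moreover have "subseq w (w1 @ w @ w2)"
    by (intro subseq_drop_many subseq_rev_drop_many) simp
  ultimately show "w \<in> downclose (Lempty (annot G) [NT N z])"
    unfolding downclose_def by blast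
qed

section \<open>Idempotents of the stack monoid\<close>

lemma RX_descendant:
  assumes "RX G X B A"
  shows "B \<in> X" and "A \<in> X" and "descendant (annot G) (NT (B, X) s) (NT (A, X) s)"
proof -
  from assms have "descendant (annot G) (NT (B, X) []) (NT (A, X) [])"
    by (auto simp: RX_def descendant_def)
  from descendant_extend_stack[OF this, of s] show "descendant (annot G) (NT (B, X) s) (NT (A, X) s)"
    by simp
qed (use assms in \<open>simp_all add: RX_def\<close>)

lemma phi1_Pair [simp]: "phi1 G \<alpha> \<beta> (f, X) = El (\<beta> f) (act G [f] X) (Mfx G f X) (\<alpha> f) X"
  by (simp add: phi1_def)

lemma phi_eq_One_iff: "phi G \<alpha> \<beta> z = One \<longleftrightarrow> z = []"
proof (cases z)
  case (Cons fX z')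
  then show ?thesis
    by (cases fX; cases "phi G \<alpha> \<beta> z'") auto
qed simp

lemma phi_descendant:
  assumes stk_used: "\<forall>f \<in> stk G. \<exists>A B. PushP A B f \<in> prods G"
    and alpha_beta: "\<forall>A B f. PushP A B f \<in> prods G \<longrightarrow> A = \<alpha> f \<and> B = \<beta> f"
  shows "set z \<subseteq> stk G \<times> Pow (nts G) \<Longrightarrow> phi G \<alpha> \<beta> z = El B Y M A X \<Longrightarrow>
    A \<in> X \<Longrightarrow> B \<in> Y \<Longrightarrow> descendant (annot G) (NT (A, X) t) (NT (B, Y) (z @ t))"
proof (induction z arbitrary: B Y M A X)
  case (Cons fX z)
  obtain f X' where fX: "fX = (f, X')" by fastforce
  with Cons.prems(1) have prod: "PushP (\<alpha> f) (\<beta> f) f \<in> prods G" and "X' \<subseteq> nts G"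
    using stk_used alpha_beta by auto
  have push: "descendant (annot G) (NT (\<alpha> f, X') s) (NT (\<beta> f, act G [f] X') ((f, X') # s))"
    if "\<alpha> f \<in> X'" "\<beta> f \<in> act G [f] X'" for s
    using derives_annot_push[OF prod \<open>X' \<subseteq> nts G\<close> that] by (rule derives_descendant)
  show ?case
  proof (cases "phi G \<alpha> \<beta> z")
    case One
    with Cons.prems(2) fX have "z = []" "A = \<alpha> f" "X = X'" "B = \<beta> f" "Y = act G [f] X'"
      by (auto simp: phi_eq_One_iff)
    then show ?thesis
      using Cons.prems(3,4) push fX by simp
  next
    case Zero
    then show ?thesis
      using Cons.prems(2) fX by simp
  next
    case (El B1 Y1 M1 A1 X1)
    with Cons.prems(2) fX have "X' = Y1" and RX: "RX G X' B1 (\<alpha> f)"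
      and B: "B = \<beta> f" "Y = act G [f] X'" and A: "A = A1" "X = X1"
      by (auto split: if_splits)
    have "descendant (annot G) (NT (A, X) t) (NT (B1, X') (z @ t))"
      using Cons.IH[OF _ El] Cons.prems(1,3) RX_descendant(1)[OF RX] A \<open>X' = Y1\<close> by simp
    also have "descendant (annot G) \<dots> (NT (\<alpha> f, X') (z @ t))"
      using RX_descendant(3)[OF RX] .
    also have "descendant (annot G) \<dots> (NT (B, Y) ((fX # z) @ t))"
      using push[OF RX_descendant(2)[OF RX]] Cons.prems(4) B fX by simp
    finally show ?thesis .
  qed
qed simp

theorem mainTheorem13:
  fixes G :: "('n,'t,'i) ig"
    and \<alpha> \<beta> :: "'i \<Rightarrow> 'n"
    and e :: "'n mon"
    and B A :: 'n and X :: "'n set" and M :: "'n \<Rightarrow> 'n \<Rightarrow> bool"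
    and zbar ze :: "('i \<times> 'n set) list"
  assumes wf: "wf_ig G"
    and useful: "start G \<in> Useful G"
    and stk_used: "\<forall>f \<in> stk G. \<exists>A B. PushP A B f \<in> prods G"
    and alpha_beta: "\<forall>A B f. PushP A B f \<in> prods G \<longrightarrow> A = \<alpha> f \<and> B = \<beta> f"
    and e_def: "e = El B X M A X"
    and idem: "mmult G e e = e"
    and e_ne: "e \<notin> {Zero, One}"
    and reach: "reachable (annot G) (B, X) zbar"
    and ze_in: "set ze \<subseteq> stk G \<times> Pow (nts G)"
    and phi_ze: "phi G \<alpha> \<beta> ze = e"
  shows "Lempty (annot G) [NT (B, X) (ze @ zbar)]
           \<subseteq> downclose (Lempty (annot G) [NT (B, X) zbar])"
proof -
  from idem have RX: "RX G X B A"
    by (auto simp: e_def split: if_splits)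
  have "descendant (annot G) (NT (B, X) zbar) (NT (A, X) zbar)"
    using RX_descendant(3)[OF RX] .
  also have "descendant (annot G) \<dots> (NT (B, X) (ze @ zbar))"
    using phi_descendant[OF stk_used alpha_beta ze_in phi_ze[unfolded e_def]] RX_descendant[OF RX]
    by blast
  finally show ?thesis
    using Lempty_descendant_downclose[OF wf useful reach] by blast
qed

end
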